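(* Let $p\ge2$ be an even integer and let $\mu\in P_p(\mathbb{R}^d)$ be a probabilistic $p$-frame for $\mathbb{R}^d$. Then $$PFP_p(\mu)\ \ge\ \frac{(p-1)(p-3)\cdots1}{(d+p-2)(d+p-4)\cdots d}\Big(\int_{\mathbb{R}^d}\|x\|^p\,d\mu(x)\Big)^2,$$ with equality if and only if $\mu$ is a tight probabilistic $p$-frame.
   Context: $P_p(\mathbb{R}^d)$ is the set of Borel probability measures on $\mathbb{R}^d$ with finite $p$-th moment. $PFP_p(\mu)=\iint|\langle x,y\rangle|^p\,d\mu(x)\,d\mu(y)$. A probability measure $\mu$ is a probabilistic $p$-frame if there exist $0<A\le B<\infty$ with $A\|y\|^p\le\int|\langle x,y\rangle|^p\,d\mu(x)\le B\|y\|^p$ for all $y\in\mathbb{R}^d$; it is a tight probabilistic $p$-frame if this holds with $A=B$. *)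

theory Defs
  imports "HOL-Probability.Probability"
begin

definition Pp :: "nat \<Rightarrow> 'a::euclidean_space measure \<Rightarrow> bool" where
  "Pp p M \<longleftrightarrow> prob_space M \<and> sets M = sets borel \<and> integrable M (\<lambda>x. norm x ^ p)"

definition PFP :: "nat \<Rightarrow> 'a::euclidean_space measure \<Rightarrow> real" where
  "PFP p M = (LINT x|M. (LINT y|M. \<bar>x \<bullet> y\<bar> ^ p))"

definition prob_p_frame :: "nat \<Rightarrow> 'a::euclidean_space measure \<Rightarrow> bool" where
  "prob_p_frame p M \<longleftrightarrow> prob_space M \<and> sets M = sets borel \<and>
     (\<exists>A B. 0 < A \<and> A \<le> B \<and>
        (\<forall>y. A * norm y ^ p \<le> (LINT x|M. \<bar>x \<bullet> y\<bar> ^ p) \<and>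
             (LINT x|M. \<bar>x \<bullet> y\<bar> ^ p) \<le> B * norm y ^ p))"

definition tight_prob_p_frame :: "nat \<Rightarrow> 'a::euclidean_space measure \<Rightarrow> bool" where
  "tight_prob_p_frame p M \<longleftrightarrow> prob_space M \<and> sets M = sets borel \<and>
     (\<exists>A. 0 < A \<and> (\<forall>y. (LINT x|M. \<bar>x \<bullet> y\<bar> ^ p) = A * norm y ^ p))"

text \<open>(p-1)(p-3)...1 / ((d+p-2)(d+p-4)...d) for p = 2k, d = dimension.\<close>
definition frame_const :: "nat \<Rightarrow> nat \<Rightarrow> real" where
  "frame_const p d = (\<Prod>j<p div 2. real (2*j+1) / real (d + 2*j))"

end

theory Submission
  imports Defs "HOL-Computational_Algebra.Polynomial"
begin

text \<open>
  Write \<open>F r m y = \<integral> \<parallel>x\<parallel>\<^sup>r (x \<bullet> y)\<^sup>m d\<mu>(x)\<close> and \<open>S j = \<integral> \<parallel>y\<parallel>\<^sup>r F r (2j) y d\<mu>(y)\<close> with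
  \<open>r = p - 2j\<close>: \<open>S 0\<close> is the squared \<open>p\<close>-th moment and \<open>S (p/2)\<close> is the frame potential. The
  kernel \<open>(d + 2j) (x \<bullet> y)\<^sup>2\<^sup>j\<^sup>+\<^sup>2 - (2j + 1) \<parallel>x\<parallel>\<^sup>2 \<parallel>y\<parallel>\<^sup>2 (x \<bullet> y)\<^sup>2\<^sup>j\<close> is a sum of products
  \<open>g(x) g(y)\<close>, the \<open>g\<close> being infinitesimal rotations applied to monomials. Integrating it
  against \<open>\<parallel>x\<parallel>\<^sup>r \<parallel>y\<parallel>\<^sup>r d\<mu>(x) d\<mu>(y)\<close> with \<open>r = p - 2j - 2\<close> gives
  \<open>(d + 2j) S (j + 1) \<ge> (2j + 1) S j\<close>, with equality iff
  \<open>(d + 2j) F r (2j + 2) y = (2j + 1) \<parallel>y\<parallel>\<^sup>2 F (r + 2) (2j) y\<close> for all \<open>y\<close>; chaining these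
  inequalities gives the bound. If all of them are equalities, the relations carry the constant
  \<open>F p 0\<close> up to \<open>F 0 p y = \<integral> \<bar>x \<bullet> y\<bar>\<^sup>p d\<mu>(x)\<close>, which becomes a multiple of \<open>\<parallel>y\<parallel>\<^sup>p\<close>.
  Conversely, if \<open>F 0 p\<close> is a multiple of \<open>\<parallel>y\<parallel>\<^sup>p\<close>, applying the Laplacian in \<open>y\<close> repeatedly
  shows that every \<open>F r (2j)\<close> is radial, and radial functions satisfy the equality relations.
\<close>

lemma sum_Basis_inner_square:
  fixes x :: "'a::euclidean_space"
  shows "(\<Sum>b\<in>Basis. (x \<bullet> b)\<^sup>2) = (norm x)\<^sup>2"
  unfolding power2_norm_eq_inner by (subst (2) euclidean_inner) (simp add: power2_eq_square)

lemma sum_PiE_Basis_prod_inner: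
  fixes X Y :: "nat \<Rightarrow> 'a::euclidean_space"
  shows "(\<Sum>i\<in>PiE {..<m} (\<lambda>_. Basis). (\<Prod>l<m. X l \<bullet> i l) * (\<Prod>l<m. Y l \<bullet> i l))
        = (\<Prod>l<m. X l \<bullet> Y l)"
proof -
  have "(\<Sum>i\<in>PiE {..<m} (\<lambda>_. Basis). (\<Prod>l<m. X l \<bullet> i l) * (\<Prod>l<m. Y l \<bullet> i l))
      = (\<Sum>i\<in>PiE {..<m} (\<lambda>_. Basis). \<Prod>l<m. (X l \<bullet> i l) * (Y l \<bullet> i l))"
    by (simp add: prod.distrib)
  also have "\<dots> = (\<Prod>l<m. \<Sum>c\<in>Basis. (X l \<bullet> c) * (Y l \<bullet> c))"
    by (rule prod_sum_PiE[symmetric]) auto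
  also have "\<dots> = (\<Prod>l<m. X l \<bullet> Y l)"
    by (simp add: euclidean_inner[symmetric])
  finally show ?thesis .
qed

corollary inner_power_eq_sum_PiE_Basis:
  fixes x y :: "'a::euclidean_space"
  shows "(x \<bullet> y) ^ m = (\<Sum>i\<in>PiE {..<m} (\<lambda>_. Basis). (\<Prod>l<m. x \<bullet> i l) * (\<Prod>l<m. y \<bullet> i l))"
  using sum_PiE_Basis_prod_inner[where X = "\<lambda>_. x" and Y = "\<lambda>_. y" and m = m] by simp

lemma prod_fun_upd_inner:
  fixes x y v w :: "'a::real_inner"
  assumes "k < m" "k' < m"
  shows "(\<Prod>l<m. ((\<lambda>_. x)(k := v)) l \<bullet> ((\<lambda>_. y)(k' := w)) l) =
     (if k = k' then (v \<bullet> w) * (x \<bullet> y) ^ (m - 1) else (v \<bullet> y) * (x \<bullet> w) * (x \<bullet> y) ^ (m - 2))"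
proof (cases "k = k'")
  case True
  have "(\<Prod>l<m. ((\<lambda>_. x)(k := v)) l \<bullet> ((\<lambda>_. y)(k' := w)) l)
      = (v \<bullet> w) * (\<Prod>l\<in>{..<m}-{k}. x \<bullet> y)"
    using assms True by (subst prod.remove[of _ k]) (auto intro!: prod.cong)
  then show ?thesis using assms True by simp
next
  case False
  have "(\<Prod>l<m. ((\<lambda>_. x)(k := v)) l \<bullet> ((\<lambda>_. y)(k' := w)) l)
      = (v \<bullet> y) * ((x \<bullet> w) * (\<Prod>l\<in>{..<m}-{k}-{k'}. x \<bullet> y))"
    using assms False
    by (subst prod.remove[of _ k], simp, simp, subst prod.remove[of _ k'])
      (auto intro!: prod.cong)
  then show ?thesis using assms False by (simp add: card_Diff_subset numeral_2_eq_2)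
qed

lemma sum_sum_if_eq:
  fixes \<alpha> \<beta> :: real and m :: nat
  shows "(\<Sum>k<m. \<Sum>k'<m. if k = k' then \<alpha> else \<beta>) = m * \<alpha> + m * (real m - 1) * \<beta>"
proof -
  have "(\<Sum>k'<m. if k = k' then \<alpha> else \<beta>) = m * \<beta> + (\<alpha> - \<beta>)" if "k < m" for k
  proof -
    have "(\<Sum>k'<m. if k = k' then \<alpha> else \<beta>) = (\<Sum>k'<m. \<beta> + (if k = k' then \<alpha> - \<beta> else 0))"
      by (rule sum.cong) auto
    also have "\<dots> = m * \<beta> + (\<alpha> - \<beta>)"
      using that by (simp add: sum.distrib sum.delta sum.delta')
    finally show ?thesis .
  qed
  then have "(\<Sum>k<m. \<Sum>k'<m. if k = k' then \<alpha> else \<beta>) = (\<Sum>k<m. m * \<beta> + (\<alpha> - \<beta>))"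
    by (intro sum.cong) auto
  also have "\<dots> = m * \<alpha> + m * (real m - 1) * \<beta>"
    by (simp add: algebra_simps)
  finally show ?thesis .
qed

definition plane_rot :: "'a \<Rightarrow> 'a \<Rightarrow> 'a::euclidean_space \<Rightarrow> 'a" where
  "plane_rot a b x = (x \<bullet> a) *\<^sub>R b - (x \<bullet> b) *\<^sub>R a"

text \<open>The rotation generator \<open>x\<^sub>a \<partial>\<^sub>b - x\<^sub>b \<partial>\<^sub>a\<close> applied to the monomial
  \<open>\<Prod>l<m. x \<bullet> i l\<close>, i.e. its derivative along the vector field \<open>plane_rot a b\<close>.\<close>

definition rot_monomial :: "nat \<Rightarrow> 'a \<Rightarrow> 'a \<Rightarrow> (nat \<Rightarrow> 'a) \<Rightarrow> 'a::euclidean_space \<Rightarrow> real" where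
  "rot_monomial m a b i x = (\<Sum>k<m. \<Prod>l<m. ((\<lambda>_. x)(k := plane_rot a b x)) l \<bullet> i l)"

lemma sum_PiE_rot_monomial_mult:
  fixes x y :: "'a::euclidean_space"
  assumes "2 \<le> m"
  shows "(\<Sum>i\<in>PiE {..<m} (\<lambda>_. Basis). rot_monomial m a b i x * rot_monomial m a b i y)
    = m * ((plane_rot a b x \<bullet> plane_rot a b y) * (x \<bullet> y) ^ (m - 1))
      + m * (m - 1) * ((plane_rot a b x \<bullet> y) * (x \<bullet> plane_rot a b y) * (x \<bullet> y) ^ (m - 2))"
proof -
  define X where "X k = (\<lambda>_. x)(k := plane_rot a b x)" for k :: nat
  define Y where "Y k = (\<lambda>_. y)(k := plane_rot a b y)" for k :: nat
  have "(\<Sum>i\<in>PiE {..<m} (\<lambda>_. Basis). rot_monomial m a b i x * rot_monomial m a b i y)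
      = (\<Sum>i\<in>PiE {..<m} (\<lambda>_. Basis). \<Sum>k<m. \<Sum>k'<m.
           (\<Prod>l<m. X k l \<bullet> i l) * (\<Prod>l<m. Y k' l \<bullet> i l))"
    by (simp add: rot_monomial_def X_def Y_def sum_product)
  also have "\<dots> = (\<Sum>k<m. \<Sum>k'<m. \<Sum>i\<in>PiE {..<m} (\<lambda>_. Basis).
           (\<Prod>l<m. X k l \<bullet> i l) * (\<Prod>l<m. Y k' l \<bullet> i l))"
    by (subst sum.swap, rule sum.cong, simp, subst sum.swap, simp)
  also have "\<dots> = (\<Sum>k<m. \<Sum>k'<m. \<Prod>l<m. X k l \<bullet> Y k' l)"
    by (simp add: sum_PiE_Basis_prod_inner)
  also have "\<dots> = (\<Sum>k<m. \<Sum>k'<m. if k = k' then (plane_rot a b x \<bullet> plane_rot a b y) * (x \<bullet> y) ^ (m - 1)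
           else (plane_rot a b x \<bullet> y) * (x \<bullet> plane_rot a b y) * (x \<bullet> y) ^ (m - 2))"
    unfolding X_def Y_def by (intro sum.cong refl prod_fun_upd_inner) auto
  also have "\<dots> = m * ((plane_rot a b x \<bullet> plane_rot a b y) * (x \<bullet> y) ^ (m - 1))
      + m * (real m - 1) * ((plane_rot a b x \<bullet> y) * (x \<bullet> plane_rot a b y) * (x \<bullet> y) ^ (m - 2))"
    by (rule sum_sum_if_eq)
  finally show ?thesis
    using assms by (simp add: of_nat_diff)
qed

lemma sum_Basis_plane_rot_inner:
  fixes x y :: "'a::euclidean_space"
  shows "(\<Sum>a\<in>Basis. \<Sum>b\<in>Basis. plane_rot a b x \<bullet> plane_rot a b y) = 2 * (real DIM('a) - 1) * (x \<bullet> y)"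
proof -
  have "plane_rot a b x \<bullet> plane_rot a b y
      = (x \<bullet> a) * (y \<bullet> a) + (x \<bullet> b) * (y \<bullet> b) - 2 * (if b = a then (x \<bullet> a) * (y \<bullet> a) else 0)"
    if "a \<in> Basis" "b \<in> Basis" for a b
    using that by (auto simp: plane_rot_def inner_diff_left inner_diff_right inner_Basis
        algebra_simps inner_commute)
  then have "(\<Sum>a\<in>Basis. \<Sum>b\<in>Basis. plane_rot a b x \<bullet> plane_rot a b y)
      = (\<Sum>a\<in>Basis. real DIM('a) * ((x \<bullet> a) * (y \<bullet> a)) + (x \<bullet> y) - 2 * ((x \<bullet> a) * (y \<bullet> a)))"
    by (intro sum.cong refl) (simp add: sum.distrib sum_subtractf euclidean_inner[symmetric]
        sum_distrib_left[symmetric])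
  also have "\<dots> = real DIM('a) * (x \<bullet> y) + real DIM('a) * (x \<bullet> y) - 2 * (x \<bullet> y)"
    by (simp add: sum.distrib sum_subtractf euclidean_inner[symmetric] sum_distrib_left[symmetric])
  finally show ?thesis by (simp add: algebra_simps)
qed

lemma sum_Basis_plane_rot_cross:
  fixes x y :: "'a::euclidean_space"
  shows "(\<Sum>a\<in>Basis. \<Sum>b\<in>Basis. (plane_rot a b x \<bullet> y) * (x \<bullet> plane_rot a b y))
    = 2 * (x \<bullet> y)\<^sup>2 - 2 * (norm x)\<^sup>2 * (norm y)\<^sup>2"
proof -
  have "(plane_rot a b x \<bullet> y) * (x \<bullet> plane_rot a b y)
      = 2 * ((x \<bullet> a) * (y \<bullet> a)) * ((x \<bullet> b) * (y \<bullet> b)) - (x \<bullet> a)\<^sup>2 * (y \<bullet> b)\<^sup>2 - (y \<bullet> a)\<^sup>2 * (x \<bullet> b)\<^sup>2"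
    for a b
    by (simp add: plane_rot_def inner_diff_left inner_diff_right algebra_simps inner_commute
        power2_eq_square)
  then have "(\<Sum>a\<in>Basis. \<Sum>b\<in>Basis. (plane_rot a b x \<bullet> y) * (x \<bullet> plane_rot a b y))
      = 2 * (\<Sum>a\<in>Basis. (x \<bullet> a) * (y \<bullet> a)) * (\<Sum>b\<in>Basis. (x \<bullet> b) * (y \<bullet> b))
        - (\<Sum>a\<in>Basis. (x \<bullet> a)\<^sup>2) * (\<Sum>b\<in>Basis. (y \<bullet> b)\<^sup>2)
        - (\<Sum>a\<in>Basis. (y \<bullet> a)\<^sup>2) * (\<Sum>b\<in>Basis. (x \<bullet> b)\<^sup>2)"
    by (simp only: sum_subtractf sum_product[symmetric]) (simp add: mult.assoc sum_distrib_left[symmetric])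
  also have "\<dots> = 2 * (x \<bullet> y)\<^sup>2 - 2 * (norm x)\<^sup>2 * (norm y)\<^sup>2"
    by (simp add: sum_Basis_inner_square euclidean_inner[symmetric] power2_eq_square)
      (simp add: dot_square_norm power2_eq_square)
  finally show ?thesis .
qed

lemma sum_rot_monomial_products:
  fixes x y :: "'a::euclidean_space"
  shows "(\<Sum>a\<in>Basis. \<Sum>b\<in>Basis. \<Sum>i\<in>PiE {..<n+2} (\<lambda>_. Basis).
            rot_monomial (n+2) a b i x * rot_monomial (n+2) a b i y)
    = 2 * (real n + 2) * ((real DIM('a) + n) * (x \<bullet> y) ^ (n+2)
                        - (real n + 1) * (norm x)\<^sup>2 * (norm y)\<^sup>2 * (x \<bullet> y) ^ n)"
proof -
  have "(\<Sum>i\<in>PiE {..<n+2} (\<lambda>_. Basis). rot_monomial (n+2) a b i x * rot_monomial (n+2) a b i y)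
     = (n+2) * (x \<bullet> y) ^ (n+1) * (plane_rot a b x \<bullet> plane_rot a b y)
       + (n+2) * (n+1) * (x \<bullet> y) ^ n * ((plane_rot a b x \<bullet> y) * (x \<bullet> plane_rot a b y))" for a b
    using sum_PiE_rot_monomial_mult[of "n+2" a b x y] by (simp add: algebra_simps)
  then have "(\<Sum>a\<in>Basis. \<Sum>b\<in>Basis. \<Sum>i\<in>PiE {..<n+2} (\<lambda>_. Basis).
            rot_monomial (n+2) a b i x * rot_monomial (n+2) a b i y)
     = (n+2) * (x \<bullet> y) ^ (n+1) * (\<Sum>a\<in>Basis. \<Sum>b\<in>Basis. plane_rot a b x \<bullet> plane_rot a b y)
       + (n+2) * (n+1) * (x \<bullet> y) ^ n
           * (\<Sum>a\<in>Basis. \<Sum>b\<in>Basis. (plane_rot a b x \<bullet> y) * (x \<bullet> plane_rot a b y))"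
    by (simp add: sum.distrib sum_distrib_left)
  also have "\<dots> = 2 * (real n + 2) * ((real DIM('a) + n) * (x \<bullet> y) ^ (n+2)
                        - (real n + 1) * (norm x)\<^sup>2 * (norm y)\<^sup>2 * (x \<bullet> y) ^ n)"
    unfolding sum_Basis_plane_rot_inner sum_Basis_plane_rot_cross
    by (simp add: algebra_simps power2_eq_square)
  finally show ?thesis by simp
qed

lemma continuous_on_rot_monomial: "continuous_on UNIV (rot_monomial m a b i)"
proof -
  have "continuous_on UNIV (\<lambda>x. ((\<lambda>_. x)(k := plane_rot a b x)) l)" for k l
    by (cases "l = k") (auto simp: plane_rot_def intro!: continuous_intros)
  then show ?thesis
    unfolding rot_monomial_def by (intro continuous_intros)
qed

lemma abs_rot_monomial_le:
  fixes x :: "'a::euclidean_space"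
  assumes "a \<in> Basis" "b \<in> Basis" "i \<in> PiE {..<m} (\<lambda>_. Basis)"
  shows "\<bar>rot_monomial m a b i x\<bar> \<le> real m * 2 ^ m * norm x ^ m"
proof -
  have "norm (plane_rot a b x) \<le> norm ((x \<bullet> a) *\<^sub>R b) + norm ((x \<bullet> b) *\<^sub>R a)"
    unfolding plane_rot_def by (rule norm_triangle_ineq4)
  also have "\<dots> \<le> 2 * norm x"
    using assms(1,2) Basis_le_norm[of a x] Basis_le_norm[of b x] by simp
  finally have rot: "norm (plane_rot a b x) \<le> 2 * norm x" .
  have "\<bar>((\<lambda>_. x)(k := plane_rot a b x)) l \<bullet> i l\<bar> \<le> 2 * norm x" if "l < m" for k l
  proof -
    have "\<bar>((\<lambda>_. x)(k := plane_rot a b x)) l \<bullet> i l\<bar> \<le> norm (((\<lambda>_. x)(k := plane_rot a b x)) l)"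
      using that assms(3) by (intro Basis_le_norm) auto
    then show ?thesis using rot by (auto split: if_splits)
  qed
  then have "\<bar>\<Prod>l<m. ((\<lambda>_. x)(k := plane_rot a b x)) l \<bullet> i l\<bar> \<le> (\<Prod>l<m. 2 * norm x)" for k
    unfolding abs_prod by (intro prod_mono) auto
  then have "\<bar>rot_monomial m a b i x\<bar> \<le> (\<Sum>k<m. (2 * norm x) ^ m)"
    unfolding rot_monomial_def by (intro order_trans[OF sum_abs] sum_mono) auto
  then show ?thesis by (simp add: power_mult_distrib)
qed

lemma abs_prod_Basis_le:
  fixes x :: "'a::euclidean_space"
  assumes "i \<in> PiE {..<m} (\<lambda>_. Basis)"
  shows "\<bar>\<Prod>l<m. x \<bullet> i l\<bar> \<le> 1 * norm x ^ m"
proof -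
  have "\<bar>\<Prod>l<m. x \<bullet> i l\<bar> \<le> (\<Prod>l<m. norm x)"
    unfolding abs_prod using assms by (intro prod_mono) (auto simp: Basis_le_norm PiE_iff)
  then show ?thesis by simp
qed

lemma abs_inner_powers_le:
  fixes x b y :: "'a::real_inner"
  shows "\<bar>(x \<bullet> b) ^ q * (x \<bullet> y) ^ k\<bar> \<le> (norm b ^ q * norm y ^ k) * norm x ^ (q + k)"
proof -
  have "\<bar>(x \<bullet> b) ^ q * (x \<bullet> y) ^ k\<bar> = \<bar>x \<bullet> b\<bar> ^ q * \<bar>x \<bullet> y\<bar> ^ k"
    by (simp add: abs_mult power_abs)
  also have "\<dots> \<le> (norm x * norm b) ^ q * (norm x * norm y) ^ k"
    by (intro mult_mono power_mono) (auto simp: Cauchy_Schwarz_ineq2)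
  also have "\<dots> = (norm b ^ q * norm y ^ k) * norm x ^ (q + k)"
    by (simp add: power_mult_distrib power_add algebra_simps)
  finally show ?thesis .
qed

corollary abs_inner_power_le:
  fixes x y :: "'a::real_inner"
  shows "\<bar>(x \<bullet> y) ^ m\<bar> \<le> norm y ^ m * norm x ^ m"
  using abs_inner_powers_le[of x 0 0 y m] by simp

lemma coeff_quadratic_power:
  fixes u0 u1 :: real
  shows "coeff ([:u0, u1, 1:] ^ n) 0 = u0 ^ n
     \<and> coeff ([:u0, u1, 1:] ^ n) 1 = n * u1 * u0 ^ (n - 1)
     \<and> coeff ([:u0, u1, 1:] ^ n) 2 = n * u0 ^ (n - 1) + (n * (n - 1) / 2) * u1\<^sup>2 * u0 ^ (n - 2)"
proof (induction n)
  case 0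
  then show ?case by simp
next
  case (Suc n)
  have pow: "[:u0, u1, 1:] ^ Suc n = smult u0 ([:u0, u1, 1:] ^ n)
      + pCons 0 (smult u1 ([:u0, u1, 1:] ^ n) + pCons 0 ([:u0, u1, 1:] ^ n))"
    by (simp add: mult_pCons_left)
  define c where "c q = coeff ([:u0, u1, 1:] ^ n) q" for q
  have rec: "coeff ([:u0, u1, 1:] ^ Suc n) 0 = u0 * c 0"
    "coeff ([:u0, u1, 1:] ^ Suc n) 1 = u0 * c 1 + u1 * c 0"
    "coeff ([:u0, u1, 1:] ^ Suc n) 2 = u0 * c 2 + u1 * c 1 + c 0"
    unfolding c_def by (subst pow; simp add: coeff_pCons numeral_2_eq_2)+
  have "c 0 = u0 ^ n" "c 1 = real n * u1 * u0 ^ (n - 1)"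
    "c 2 = real n * u0 ^ (n - 1) + (real n * (real n - 1) / 2) * u1\<^sup>2 * u0 ^ (n - 2)"
    using Suc.IH by (simp_all add: c_def)
  then show ?case
    unfolding rec by (cases n; cases "n - 1") (simp_all add: power2_eq_square algebra_simps)
qed

lemma telescoping_lower_bound:
  fixes S a b :: "nat \<Rightarrow> real"
  assumes "\<And>j. j < k \<Longrightarrow> 0 < a j" "\<And>j. j < k \<Longrightarrow> 0 < b j"
    and "\<And>j. j < k \<Longrightarrow> b j * S j \<le> a j * S (Suc j)"
  shows "(\<Prod>j<k. b j / a j) * S 0 \<le> S k
    \<and> ((\<Prod>j<k. b j / a j) * S 0 = S k \<longleftrightarrow> (\<forall>j<k. b j * S j = a j * S (Suc j)))"
  using assms
proof (induction k)
  case 0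
  then show ?case by simp
next
  case (Suc n)
  define C where "C = (\<Prod>j<n. b j / a j)"
  define q where "q = b n / a n"
  have IH: "C * S 0 \<le> S n \<and> (C * S 0 = S n \<longleftrightarrow> (\<forall>j<n. b j * S j = a j * S (Suc j)))"
    using Suc by (simp add: C_def)
  have an: "0 < a n" and q: "0 < q" and step: "q * S n \<le> S (Suc n)"
    using Suc.prems[of n] by (auto simp: q_def field_simps)
  have le: "q * (C * S 0) \<le> q * S n"
    using IH q by simp
  have "q * (C * S 0) = S (Suc n) \<longleftrightarrow> C * S 0 = S n \<and> q * S n = S (Suc n)"
  proof
    assume eq: "q * (C * S 0) = S (Suc n)"
    then have "q * S n = S (Suc n)"
      using le step by linarith
    with eq q show "C * S 0 = S n \<and> q * S n = S (Suc n)"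
      by (metis less_irrefl mult_left_cancel)
  qed simp
  also have "\<dots> \<longleftrightarrow> (\<forall>j<Suc n. b j * S j = a j * S (Suc j))"
    using IH an by (auto simp: q_def less_Suc_eq field_simps)
  finally have eq_iff: "q * (C * S 0) = S (Suc n) \<longleftrightarrow> (\<forall>j<Suc n. b j * S j = a j * S (Suc j))" .
  have "(\<Prod>j<Suc n. b j / a j) * S 0 = q * (C * S 0)"
    by (simp add: C_def q_def)
  moreover have "q * (C * S 0) \<le> S (Suc n)"
    using le step by linarith
  ultimately show ?case
    using eq_iff by simp
qed

lemma frame_const_pos: "0 < d \<Longrightarrow> 0 < frame_const p d"
  unfolding frame_const_def by (intro prod_pos divide_pos_pos) auto

locale finite_moment =
  fixes M :: "'a::euclidean_space measure" and p :: nat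
  assumes sets_M: "sets M = sets borel"
    and integrable_norm_pow: "integrable M (\<lambda>x. norm x ^ p)"
begin

lemma borel_measurable_continuous_on: "continuous_on UNIV h \<Longrightarrow> h \<in> borel_measurable M"
  using borel_measurable_continuous_onI measurable_cong_sets[OF sets_M refl] by blast

lemma integrable_norm_pow_mult:
  fixes h :: "'a \<Rightarrow> real"
  assumes "r + m = p" "continuous_on UNIV h" "\<And>x. \<bar>h x\<bar> \<le> C * norm x ^ m"
  shows "integrable M (\<lambda>x. norm x ^ r * h x)"
proof (rule Bochner_Integration.integrable_bound[where f = "\<lambda>x. C * norm x ^ p"])
  show "integrable M (\<lambda>x. C * norm x ^ p)"
    using integrable_norm_pow by simp
  show "(\<lambda>x. norm x ^ r * h x) \<in> borel_measurable M"
    using assms(2) by (intro borel_measurable_continuous_on continuous_intros)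
  have "\<bar>norm x ^ r * h x\<bar> \<le> C * norm x ^ p" for x
  proof -
    have "\<bar>norm x ^ r * h x\<bar> \<le> norm x ^ r * (C * norm x ^ m)"
      using assms(3)[of x] by (simp add: abs_mult mult_left_mono)
    also have "\<dots> = C * norm x ^ p"
      using assms(1) by (simp add: power_add[symmetric] algebra_simps)
    finally show ?thesis .
  qed
  then show "AE x in M. norm (norm x ^ r * h x) \<le> norm (C * norm x ^ p)"
    by (intro AE_I2) (force intro: order_trans[OF _ abs_ge_self])
qed

definition moment_fun :: "nat \<Rightarrow> nat \<Rightarrow> 'a \<Rightarrow> real" where
  "moment_fun r m y = (LINT x|M. norm x ^ r * (x \<bullet> y) ^ m)"

definition double_moment :: "nat \<Rightarrow> nat \<Rightarrow> real" where
  "double_moment r m = (LINT y|M. norm y ^ r * moment_fun r m y)"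

lemma integrable_moment_integrand:
  "r + m = p \<Longrightarrow> integrable M (\<lambda>x. norm x ^ r * (x \<bullet> y) ^ m)"
  by (rule integrable_norm_pow_mult[where C = "norm y ^ m"])
    (auto intro!: continuous_intros simp: abs_inner_power_le)

lemma moment_fun_eq_polynomial:
  assumes "r + m = p"
  shows "moment_fun r m y = (\<Sum>i\<in>PiE {..<m} (\<lambda>_. Basis).
            (LINT x|M. norm x ^ r * (\<Prod>l<m. x \<bullet> i l)) * (\<Prod>l<m. y \<bullet> i l))"
proof -
  have "integrable M (\<lambda>x. norm x ^ r * (\<Prod>l<m. x \<bullet> i l))" if "i \<in> PiE {..<m} (\<lambda>_. Basis)" for i
    using that by (intro integrable_norm_pow_mult[OF assms, where C = 1] abs_prod_Basis_le)
      (auto intro!: continuous_intros)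
  then have "(LINT x|M. (\<Sum>i\<in>PiE {..<m} (\<lambda>_. Basis).
               norm x ^ r * (\<Prod>l<m. x \<bullet> i l) * (\<Prod>l<m. y \<bullet> i l)))
      = (\<Sum>i\<in>PiE {..<m} (\<lambda>_. Basis).
            (LINT x|M. norm x ^ r * (\<Prod>l<m. x \<bullet> i l)) * (\<Prod>l<m. y \<bullet> i l))"
    by (subst Bochner_Integration.integral_sum) auto
  moreover have "norm x ^ r * (x \<bullet> y) ^ m = (\<Sum>i\<in>PiE {..<m} (\<lambda>_. Basis).
               norm x ^ r * (\<Prod>l<m. x \<bullet> i l) * (\<Prod>l<m. y \<bullet> i l))" for x
    by (simp add: inner_power_eq_sum_PiE_Basis sum_distrib_left mult.assoc)
  ultimately show ?thesis
    by (simp add: moment_fun_def)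
qed

lemma continuous_on_moment_fun: "r + m = p \<Longrightarrow> continuous_on UNIV (moment_fun r m)"
  by (subst fun_eq_iff[THEN iffD2, OF allI[OF moment_fun_eq_polynomial]])
    (auto intro!: continuous_intros)

lemma abs_moment_fun_le:
  assumes "r + m = p"
  shows "\<bar>moment_fun r m y\<bar> \<le> (LINT x|M. norm x ^ p) * norm y ^ m"
proof -
  have "\<bar>norm x ^ r * (x \<bullet> y) ^ m\<bar> \<le> norm y ^ m * norm x ^ p" for x
  proof -
    have "\<bar>norm x ^ r * (x \<bullet> y) ^ m\<bar> \<le> norm x ^ r * (norm y ^ m * norm x ^ m)"
      by (simp add: abs_mult mult_left_mono abs_inner_power_le)
    also have "\<dots> = norm y ^ m * norm x ^ p"
      unfolding assms[symmetric] power_add by (simp add: mult_ac)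
    finally show ?thesis .
  qed
  then have "norm (moment_fun r m y) \<le> (LINT x|M. norm y ^ m * norm x ^ p)"
    unfolding moment_fun_def
    by (intro Bochner_Integration.integral_norm_bound_integral integrable_moment_integrand assms)
      (auto simp: integrable_norm_pow)
  then show ?thesis
    by (simp add: mult.commute)
qed

lemma integrable_double_moment_integrand:
  assumes "r + m = p"
  shows "integrable M (\<lambda>y. norm y ^ r * moment_fun r m y)"
  using assms continuous_on_moment_fun[OF assms] abs_moment_fun_le[OF assms]
  by (intro integrable_norm_pow_mult[where C = "LINT x|M. norm x ^ p"])

definition rot_moment :: "nat \<Rightarrow> nat \<Rightarrow> 'a \<Rightarrow> 'a \<Rightarrow> (nat \<Rightarrow> 'a) \<Rightarrow> real" where
  "rot_moment r m a b i = (LINT x|M. norm x ^ r * rot_monomial m a b i x)"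

definition moment_gap :: "nat \<Rightarrow> nat \<Rightarrow> 'a \<Rightarrow> real" where
  "moment_gap r n y = (real DIM('a) + n) * moment_fun r (n + 2) y
                      - (real n + 1) * (norm y)\<^sup>2 * moment_fun (r + 2) n y"

definition double_moment_gap :: "nat \<Rightarrow> nat \<Rightarrow> real" where
  "double_moment_gap r n =
     (real DIM('a) + n) * double_moment r (n + 2) - (real n + 1) * double_moment (r + 2) n"

lemma integrable_rot_moment_integrand:
  assumes "r + m = p" "a \<in> Basis" "b \<in> Basis" "i \<in> PiE {..<m} (\<lambda>_. Basis)"
  shows "integrable M (\<lambda>x. norm x ^ r * rot_monomial m a b i x)"
  using assms continuous_on_rot_monomial abs_rot_monomial_le
  by (intro integrable_norm_pow_mult[where C = "real m * 2 ^ m"])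

lemma moment_gap_eq_sum_rot_moment:
  assumes "r + n + 2 = p"
  shows "2 * (real n + 2) * (norm y ^ r * moment_gap r n y)
    = (\<Sum>a\<in>Basis. \<Sum>b\<in>Basis. \<Sum>i\<in>PiE {..<n+2} (\<lambda>_. Basis).
         rot_moment r (n+2) a b i * (norm y ^ r * rot_monomial (n+2) a b i y))"
proof -
  let ?I = "PiE {..<n+2} (\<lambda>_. Basis :: 'a set)"
  let ?g = "\<lambda>a b i x. norm x ^ r * rot_monomial (n+2) a b i x"
  have int_g: "integrable M (\<lambda>x. ?g a b i x * ?g a b i y)" if "a \<in> Basis" "b \<in> Basis" "i \<in> ?I" for a b i
    using that assms by (intro integrable_mult_left integrable_rot_moment_integrand) auto
  define k where "k x = (real DIM('a) + n) * (norm x ^ r * (x \<bullet> y) ^ (n + 2))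
      - (real n + 1) * (norm y)\<^sup>2 * (norm x ^ (r + 2) * (x \<bullet> y) ^ n)" for x
  have kernel: "2 * (real n + 2) * (norm y ^ r * k x)
      = (\<Sum>a\<in>Basis. \<Sum>b\<in>Basis. \<Sum>i\<in>?I. ?g a b i x * ?g a b i y)" for x
  proof -
    have "(\<Sum>a\<in>Basis. \<Sum>b\<in>Basis. \<Sum>i\<in>?I. ?g a b i x * ?g a b i y)
        = (norm x ^ r * norm y ^ r) * (\<Sum>a\<in>Basis. \<Sum>b\<in>Basis. \<Sum>i\<in>?I.
            rot_monomial (n+2) a b i x * rot_monomial (n+2) a b i y)"
      by (simp add: sum_distrib_left algebra_simps)
    then show ?thesis
      unfolding sum_rot_monomial_products k_def by (simp add: power_add algebra_simps power2_eq_square)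
  qed
  have "moment_gap r n y = (LINT x|M. k x)"
    using assms integrable_moment_integrand[of r "n + 2"] integrable_moment_integrand[of "r + 2" n]
    by (simp add: moment_gap_def moment_fun_def k_def)
  then have "2 * (real n + 2) * (norm y ^ r * moment_gap r n y)
      = (LINT x|M. 2 * (real n + 2) * (norm y ^ r * k x))"
    by simp
  also have "\<dots> = (LINT x|M. (\<Sum>a\<in>Basis. \<Sum>b\<in>Basis. \<Sum>i\<in>?I. ?g a b i x * ?g a b i y))"
    by (simp only: kernel)
  also have "\<dots> = (\<Sum>a\<in>Basis. \<Sum>b\<in>Basis. \<Sum>i\<in>?I. LINT x|M. ?g a b i x * ?g a b i y)"
    using int_g by (simp add: Bochner_Integration.integral_sum integrable_sum)
  also have "\<dots> = (\<Sum>a\<in>Basis. \<Sum>b\<in>Basis. \<Sum>i\<in>?I.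
                      rot_moment r (n+2) a b i * (norm y ^ r * rot_monomial (n+2) a b i y))"
    by (simp add: rot_moment_def)
  finally show ?thesis .
qed

lemma double_moment_gap_eq_integral:
  assumes "r + n + 2 = p"
  shows "double_moment_gap r n
    = (LINT y|M. norm y ^ r * moment_gap r n y)"
proof -
  have "(LINT y|M. norm y ^ r * moment_gap r n y)
      = (LINT y|M. (real DIM('a) + n) * (norm y ^ r * moment_fun r (n + 2) y)
                   - (real n + 1) * (norm y ^ (r + 2) * moment_fun (r + 2) n y))"
    by (rule Bochner_Integration.integral_cong)
      (simp_all add: moment_gap_def power_add algebra_simps power2_eq_square)
  also have "\<dots> = double_moment_gap r n"
    using assms integrable_double_moment_integrand[of r "n + 2"]
      integrable_double_moment_integrand[of "r + 2" n]
    by (simp add: double_moment_gap_def double_moment_def)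
  finally show ?thesis ..
qed

lemma double_moment_gap_eq_sum_squares:
  assumes "r + n + 2 = p"
  shows "2 * (real n + 2) * double_moment_gap r n
    = (\<Sum>a\<in>Basis. \<Sum>b\<in>Basis. \<Sum>i\<in>PiE {..<n+2} (\<lambda>_. Basis). (rot_moment r (n+2) a b i)\<^sup>2)"
proof -
  let ?I = "PiE {..<n+2} (\<lambda>_. Basis :: 'a set)"
  have int: "integrable M (\<lambda>y. rot_moment r (n+2) a b i * (norm y ^ r * rot_monomial (n+2) a b i y))"
    if "a \<in> Basis" "b \<in> Basis" "i \<in> ?I" for a b i
    using that assms by (intro integrable_mult_right integrable_rot_moment_integrand) auto
  have "2 * (real n + 2) * double_moment_gap r n
      = (LINT y|M. 2 * (real n + 2) * (norm y ^ r * moment_gap r n y))"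
    unfolding double_moment_gap_eq_integral[OF assms] by simp
  also have "\<dots> = (LINT y|M. (\<Sum>a\<in>Basis. \<Sum>b\<in>Basis. \<Sum>i\<in>?I.
                      rot_moment r (n+2) a b i * (norm y ^ r * rot_monomial (n+2) a b i y)))"
    using assms by (simp only: moment_gap_eq_sum_rot_moment)
  also have "\<dots> = (\<Sum>a\<in>Basis. \<Sum>b\<in>Basis. \<Sum>i\<in>?I. (rot_moment r (n+2) a b i)\<^sup>2)"
    using int by (simp add: Bochner_Integration.integral_sum integrable_sum rot_moment_def power2_eq_square)
  finally show ?thesis .
qed

lemma double_moment_gap_nonneg:
  assumes "r + n + 2 = p"
  shows "0 \<le> double_moment_gap r n"
proof -
  have "0 \<le> 2 * (real n + 2) * double_moment_gap r n"
    unfolding double_moment_gap_eq_sum_squares[OF assms] by (intro sum_nonneg) auto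
  then show ?thesis
    by (simp add: zero_le_mult_iff)
qed

lemma double_moment_gap_eq_0_iff:
  assumes "r + n + 2 = p"
  shows "double_moment_gap r n = 0
    \<longleftrightarrow> (\<forall>y. moment_gap r n y = 0)"
proof
  assume "double_moment_gap r n = 0"
  then have "(\<Sum>a\<in>Basis. \<Sum>b\<in>Basis. \<Sum>i\<in>PiE {..<n+2} (\<lambda>_. Basis). (rot_moment r (n+2) a b i)\<^sup>2) = 0"
    using double_moment_gap_eq_sum_squares[OF assms] by simp
  then have "\<forall>a\<in>Basis. \<forall>b\<in>Basis. \<forall>i\<in>PiE {..<n+2} (\<lambda>_. Basis). rot_moment r (n+2) a b i = 0"
    by (simp add: sum_nonneg_eq_0_iff sum_nonneg finite_PiE)
  then have "norm y ^ r * moment_gap r n y = 0" for y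
    using moment_gap_eq_sum_rot_moment[OF assms, of y] by simp
  moreover have "moment_gap r n 0 = 0"
    by (simp add: moment_gap_def moment_fun_def)
  ultimately show "\<forall>y. moment_gap r n y = 0"
    by (metis mult_eq_0_iff norm_eq_zero power_eq_0_iff)
next
  assume "\<forall>y. moment_gap r n y = 0"
  then show "double_moment_gap r n = 0"
    using double_moment_gap_eq_integral[OF assms] by simp
qed

definition mixed_moment :: "nat \<Rightarrow> nat \<Rightarrow> nat \<Rightarrow> 'a \<Rightarrow> 'a \<Rightarrow> real" where
  "mixed_moment r q k b y = (LINT x|M. norm x ^ r * ((x \<bullet> b) ^ q * (x \<bullet> y) ^ k))"

lemma integrable_mixed_moment_integrand:
  "r + (q + k) = p \<Longrightarrow> integrable M (\<lambda>x. norm x ^ r * ((x \<bullet> b) ^ q * (x \<bullet> y) ^ k))"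
  by (rule integrable_norm_pow_mult[where C = "norm b ^ q * norm y ^ k"])
    (auto intro!: continuous_intros simp: abs_inner_powers_le)

lemma moment_fun_add_scaleR:
  assumes "r + m = p"
  shows "moment_fun r m (y + t *\<^sub>R b) = (\<Sum>q\<le>m. real (m choose q) * mixed_moment r q (m - q) b y * t ^ q)"
proof -
  have "norm x ^ r * (x \<bullet> (y + t *\<^sub>R b)) ^ m
      = (\<Sum>q\<le>m. (real (m choose q) * t ^ q) * (norm x ^ r * ((x \<bullet> b) ^ q * (x \<bullet> y) ^ (m - q))))" for x
  proof -
    have "(x \<bullet> (y + t *\<^sub>R b)) ^ m = (t * (x \<bullet> b) + x \<bullet> y) ^ m"
      by (simp add: inner_add_right algebra_simps)
    also have "\<dots> = (\<Sum>q\<le>m. real (m choose q) * (t * (x \<bullet> b)) ^ q * (x \<bullet> y) ^ (m - q))"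
      by (rule binomial_ring)
    finally show ?thesis
      by (simp add: sum_distrib_left power_mult_distrib algebra_simps)
  qed
  then show ?thesis
    using assms integrable_mixed_moment_integrand
    by (simp add: moment_fun_def mixed_moment_def Bochner_Integration.integral_sum algebra_simps)
qed

text \<open>Reading off the \<open>t\<^sup>2\<close>-coefficient of \<open>moment_fun r m (y + t b)\<close> amounts to
  differentiating twice in the direction \<open>b\<close>; summed over \<open>b\<close> it yields a Laplacian.\<close>

lemma mixed_moment_two_if_radial:
  assumes "r + (2 * j + 2) = p" and radial: "\<And>y. moment_fun r (2 * j + 2) y = B * norm y ^ (2 * j + 2)"
    and b: "b \<in> Basis"
  shows "real ((2 * j + 2) choose 2) * mixed_moment r 2 (2 * j) b y
    = B * ((j + 1) * ((norm y)\<^sup>2) ^ j) + B * (2 * (j + 1) * j * ((norm y)\<^sup>2) ^ (j - 1)) * (y \<bullet> b)\<^sup>2"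
proof -
  define m where "m = 2 * j + 2"
  define P where "P = (\<Sum>q\<le>m. monom (real (m choose q) * mixed_moment r q (m - q) b y) q)"
  define Q where "Q = smult B ([:(norm y)\<^sup>2, 2 * (y \<bullet> b), 1:] ^ (j + 1))"
  have "poly P t = poly Q t" for t
  proof -
    have "(norm (y + t *\<^sub>R b))\<^sup>2 = (norm y)\<^sup>2 + t * (2 * (y \<bullet> b) + t)"
      using b by (simp add: power2_norm_eq_inner inner_add_left inner_add_right algebra_simps
          inner_commute inner_Basis)
    moreover have "norm (y + t *\<^sub>R b) ^ m = ((norm (y + t *\<^sub>R b))\<^sup>2) ^ (j + 1)"
      unfolding power_mult[symmetric] m_def by (simp add: algebra_simps)
    ultimately have "norm (y + t *\<^sub>R b) ^ m = ((norm y)\<^sup>2 + t * (2 * (y \<bullet> b) + t)) ^ (j + 1)"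
      by simp
    moreover have "poly P t = moment_fun r m (y + t *\<^sub>R b)"
      using assms(1) by (simp add: P_def m_def poly_sum poly_monom moment_fun_add_scaleR)
    ultimately show ?thesis
      using radial by (simp add: Q_def m_def algebra_simps)
  qed
  then have "P = Q"
    using poly_eq_poly_eq_iff by blast
  then have "coeff P 2 = coeff Q 2"
    by simp
  moreover have "coeff P 2 = real (m choose 2) * mixed_moment r 2 (2 * j) b y"
  proof -
    have "coeff P 2 = (\<Sum>q\<le>m. if q = 2 then real (m choose q) * mixed_moment r q (m - q) b y else 0)"
      by (simp only: P_def coeff_sum coeff_monom)
    also have "\<dots> = real (m choose 2) * mixed_moment r 2 (m - 2) b y"
      by (simp only: sum.delta finite_atMost) (simp add: m_def)
    finally show ?thesis
      by (simp add: m_def)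
  qed
  moreover have "coeff Q 2 = B * ((j + 1) * ((norm y)\<^sup>2) ^ j)
      + B * (2 * (j + 1) * j * ((norm y)\<^sup>2) ^ (j - 1)) * (y \<bullet> b)\<^sup>2"
    using coeff_quadratic_power[of "(norm y)\<^sup>2" "2 * (y \<bullet> b)" "j + 1"]
    by (simp add: Q_def power2_eq_square algebra_simps)
  ultimately show ?thesis
    by (simp add: m_def algebra_simps)
qed

lemma moment_fun_radial_step:
  assumes "r + (2 * j + 2) = p" and radial: "\<And>y. moment_fun r (2 * j + 2) y = B * norm y ^ (2 * j + 2)"
  shows "moment_fun (r + 2) (2 * j) y = B * (real DIM('a) + 2 * j) / (2 * j + 1) * norm y ^ (2 * j)"
proof -
  define s where "s = (norm y)\<^sup>2"
  have laplace: "moment_fun (r + 2) (2 * j) y = (\<Sum>b\<in>Basis. mixed_moment r 2 (2 * j) b y)"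
  proof -
    have "norm x ^ (r + 2) * (x \<bullet> y) ^ (2 * j)
        = (\<Sum>b\<in>Basis. norm x ^ r * ((x \<bullet> b)\<^sup>2 * (x \<bullet> y) ^ (2 * j)))" for x :: 'a
      by (simp only: sum_distrib_left[symmetric] sum_distrib_right[symmetric] sum_Basis_inner_square)
        (simp add: power_add power2_eq_square algebra_simps)
    then show ?thesis
      using assms(1) integrable_mixed_moment_integrand[of r 2 "2 * j"]
      by (simp add: moment_fun_def mixed_moment_def Bochner_Integration.integral_sum)
  qed
  have "(j + 1) * (2 * j + 1) * moment_fun (r + 2) (2 * j) y
      = (\<Sum>b\<in>Basis. real ((2 * j + 2) choose 2) * mixed_moment r 2 (2 * j) b y)"
  proof -
    have "real ((2 * j + 2) choose 2) = (j + 1) * (2 * j + 1)"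
      by (simp add: choose_two algebra_simps)
    then show ?thesis
      unfolding laplace sum_distrib_left[symmetric] by simp
  qed
  also have "\<dots> = (\<Sum>b\<in>Basis. B * ((j + 1) * s ^ j) + B * (2 * (j + 1) * j * s ^ (j - 1)) * (y \<bullet> b)\<^sup>2)"
    using mixed_moment_two_if_radial[OF assms(1) radial]
    by (intro sum.cong refl) (simp add: s_def algebra_simps)
  also have "\<dots> = real DIM('a) * (B * ((j + 1) * s ^ j)) + B * (2 * (j + 1) * j * s ^ (j - 1)) * s"
    by (simp add: sum.distrib sum_distrib_left[symmetric] sum_Basis_inner_square s_def)
  also have "\<dots> = (j + 1) * (B * (real DIM('a) + 2 * j) * s ^ j)"
    by (cases j) (simp_all add: algebra_simps)
  finally have "(real j + 1) * ((2 * j + 1) * moment_fun (r + 2) (2 * j) y)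
      = (real j + 1) * (B * (real DIM('a) + 2 * j) * s ^ j)"
    by (simp add: algebra_simps)
  then have "(2 * j + 1) * moment_fun (r + 2) (2 * j) y = B * (real DIM('a) + 2 * j) * s ^ j"
    by (subst (asm) mult_left_cancel) auto
  also have "s ^ j = norm y ^ (2 * j)"
    by (simp add: s_def power_mult)
  finally show ?thesis
    by (simp add: field_simps)
qed

corollary moment_gap_eq_0_if_radial:
  assumes "r + (2 * j + 2) = p" and radial: "\<And>y. moment_fun r (2 * j + 2) y = B * norm y ^ (2 * j + 2)"
  shows "moment_gap r (2 * j) y = 0"
proof -
  have "moment_gap r (2 * j) y = (norm y)\<^sup>2 * (B * (real DIM('a) + 2 * j) * norm y ^ (2 * j)
      - (2 * j + 1) * moment_fun (r + 2) (2 * j) y)"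
    using radial[of y] by (simp add: moment_gap_def power_add power2_eq_square algebra_simps)
  also have "(2 * j + 1) * moment_fun (r + 2) (2 * j) y = B * (real DIM('a) + 2 * j) * norm y ^ (2 * j)"
    using moment_fun_radial_step[OF assms, of y] by (simp add: field_simps)
  finally show ?thesis
    by simp
qed

lemma double_moment_eq_PFP: "even p \<Longrightarrow> double_moment 0 p = PFP p M"
  by (simp add: double_moment_def moment_fun_def PFP_def power_even_abs inner_commute)

lemma double_moment_eq_moment_square: "double_moment p 0 = (LINT x|M. norm x ^ p)\<^sup>2"
  by (simp add: double_moment_def moment_fun_def power2_eq_square)

lemma PFP_lower_bound:
  assumes "p = 2 * k"
  shows "frame_const p DIM('a) * (LINT x|M. norm x ^ p)\<^sup>2 \<le> PFP p M
    \<and> (frame_const p DIM('a) * (LINT x|M. norm x ^ p)\<^sup>2 = PFP p M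
         \<longleftrightarrow> (\<forall>j<k. \<forall>y. moment_gap (p - 2 * j - 2) (2 * j) y = 0))"
proof -
  define S where "S j = double_moment (p - 2 * j) (2 * j)" for j
  have step: "(2 * real j + 1) * S j \<le> (real DIM('a) + 2 * j) * S (Suc j)
      \<and> ((2 * real j + 1) * S j = (real DIM('a) + 2 * j) * S (Suc j)
           \<longleftrightarrow> (\<forall>y. moment_gap (p - 2 * j - 2) (2 * j) y = 0))"
    if "j < k" for j
  proof -
    have r: "p - 2 * j - 2 + 2 * j + 2 = p" and "p - 2 * j - 2 + 2 = p - 2 * j"
      and "2 * j + 2 = 2 * Suc j" and "p - 2 * j - 2 = p - 2 * Suc j"
      using that assms by auto
    then show ?thesis
      using double_moment_gap_nonneg[OF r] double_moment_gap_eq_0_iff[OF r]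
      by (auto simp: S_def double_moment_gap_def)
  qed
  have "frame_const p DIM('a) = (\<Prod>j<k. (2 * real j + 1) / (real DIM('a) + 2 * j))"
    by (simp add: frame_const_def assms add.commute)
  moreover have "S 0 = (LINT x|M. norm x ^ p)\<^sup>2"
    by (simp add: S_def double_moment_eq_moment_square)
  moreover have "S k = PFP p M"
  proof -
    have "S k = double_moment 0 p"
      using assms by (simp add: S_def)
    also have "\<dots> = PFP p M"
      using assms by (intro double_moment_eq_PFP) simp
    finally show ?thesis .
  qed
  ultimately show ?thesis
    using telescoping_lower_bound[of k "\<lambda>j. real DIM('a) + 2 * j" "\<lambda>j. 2 * real j + 1" S] step
    by (auto simp: add_pos_nonneg)
qed

lemma moment_fun_radial_if_gaps_vanish:
  assumes p: "p = 2 * k" and gaps: "\<forall>j<k. \<forall>y. moment_gap (p - 2 * j - 2) (2 * j) y = 0"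
  shows "moment_fun 0 p y = frame_const p DIM('a) * (LINT x|M. norm x ^ p) * norm y ^ p"
proof -
  have "moment_fun (p - 2 * n) (2 * n) y
      = (\<Prod>j<n. (2 * real j + 1) / (real DIM('a) + 2 * j)) * (LINT x|M. norm x ^ p) * norm y ^ (2 * n)"
    if "n \<le> k" for n y
    using that
  proof (induction n arbitrary: y)
    case 0
    then show ?case by (simp add: moment_fun_def)
  next
    case (Suc n)
    have "p - 2 * n - 2 = p - 2 * Suc n" "p - 2 * n - 2 + 2 = p - 2 * n" "2 * n + 2 = 2 * Suc n"
      using Suc.prems p by auto
    then have "(real DIM('a) + 2 * n) * moment_fun (p - 2 * Suc n) (2 * Suc n) y
        = (2 * n + 1) * (norm y)\<^sup>2 * moment_fun (p - 2 * n) (2 * n) y"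
      using gaps Suc.prems by (auto simp: moment_gap_def)
    moreover have "0 < real DIM('a) + 2 * n"
      by (simp add: add_pos_nonneg)
    ultimately show ?case
      using Suc by (simp add: field_simps power2_eq_square)
  qed
  from this[of k] show ?thesis
    using p by (simp add: frame_const_def add.commute)
qed

lemma gaps_vanish_if_moment_fun_radial:
  assumes p: "p = 2 * k" and radial: "\<And>y. moment_fun 0 p y = A * norm y ^ p"
  shows "\<forall>j<k. \<forall>y. moment_gap (p - 2 * j - 2) (2 * j) y = 0"
proof -
  have "\<exists>B. \<forall>y. moment_fun (2 * i) (2 * (k - i)) y = B * norm y ^ (2 * (k - i))" if "i \<le> k" for i
    using that
  proof (induction i)
    case 0
    then show ?case
      using radial p by auto
  next
    case (Suc i)
    have k: "2 * (k - i) = 2 * (k - Suc i) + 2"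
      using Suc.prems by simp
    obtain B where "\<forall>y. moment_fun (2 * i) (2 * (k - i)) y = B * norm y ^ (2 * (k - i))"
      using Suc by auto
    then have B: "\<And>y. moment_fun (2 * i) (2 * (k - Suc i) + 2) y = B * norm y ^ (2 * (k - Suc i) + 2)"
      unfolding k by blast
    have "2 * i + (2 * (k - Suc i) + 2) = p"
      using Suc.prems p by simp
    have "2 * i + 2 = 2 * Suc i"
      by simp
    with moment_fun_radial_step[OF \<open>2 * i + (2 * (k - Suc i) + 2) = p\<close> B] show ?case
      by metis
  qed
  moreover have "p - 2 * j - 2 + (2 * j + 2) = p" "2 * (k - (k - Suc j)) = 2 * j + 2" "2 * (k - Suc j) = p - 2 * j - 2"
    if "j < k" for j
    using that p by auto
  ultimately show ?thesis
    by (metis moment_gap_eq_0_if_radial diff_le_self)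
qed

lemma moment_pos_if_prob_p_frame:
  assumes "prob_p_frame p M"
  shows "0 < (LINT x|M. norm x ^ p)"
proof -
  obtain A where A: "0 < A" "\<And>y. A * norm y ^ p \<le> (LINT x|M. \<bar>x \<bullet> y\<bar> ^ p)"
    using assms unfolding prob_p_frame_def by auto
  obtain b :: 'a where b: "b \<in> Basis"
    using nonempty_Basis by blast
  have "A \<le> (LINT x|M. \<bar>x \<bullet> b\<bar> ^ p)"
    using A(2)[of b] b by simp
  also have "\<dots> \<le> (LINT x|M. norm x ^ p)"
    using integrable_abs[OF integrable_moment_integrand[of 0 p b]] b
    by (intro Bochner_Integration.integral_mono integrable_norm_pow power_mono)
      (auto simp: power_abs Basis_le_norm)
  finally show ?thesis
    using A(1) by simp
qed

end

theorem mainTheorem14: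
  fixes M :: "'a::euclidean_space measure" and p :: nat
  assumes "even p" and "p \<ge> 2"
    and "Pp p M"
    and "prob_p_frame p M"
  shows "PFP p M \<ge> frame_const p DIM('a) * (LINT x|M. norm x ^ p)\<^sup>2
         \<and> (PFP p M = frame_const p DIM('a) * (LINT x|M. norm x ^ p)\<^sup>2
              \<longleftrightarrow> tight_prob_p_frame p M)"
proof -
  obtain k where p: "p = 2 * k"
    using assms(1) by (auto elim: evenE)
  interpret finite_moment M p
    using assms(3) by unfold_locales (simp_all add: Pp_def)
  let ?C = "frame_const p DIM('a)" and ?E = "LINT x|M. norm x ^ p"
  have frame_integral: "(LINT x|M. \<bar>x \<bullet> y\<bar> ^ p) = moment_fun 0 p y" for y
    using assms(1) by (simp add: moment_fun_def power_even_abs)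
  have "PFP p M = ?C * ?E\<^sup>2 \<longleftrightarrow> tight_prob_p_frame p M"
  proof
    assume "PFP p M = ?C * ?E\<^sup>2"
    then have "\<forall>y. (LINT x|M. \<bar>x \<bullet> y\<bar> ^ p) = (?C * ?E) * norm y ^ p"
      using PFP_lower_bound[OF p] moment_fun_radial_if_gaps_vanish[OF p] frame_integral by simp
    moreover have "0 < ?C * ?E"
      using frame_const_pos moment_pos_if_prob_p_frame[OF assms(4)] by simp
    ultimately show "tight_prob_p_frame p M"
      using assms(3) unfolding tight_prob_p_frame_def Pp_def by blast
  next
    assume "tight_prob_p_frame p M"
    then obtain A where "\<And>y. moment_fun 0 p y = A * norm y ^ p"
      unfolding tight_prob_p_frame_def frame_integral by blast
    then show "PFP p M = ?C * ?E\<^sup>2"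
      using PFP_lower_bound[OF p] gaps_vanish_if_moment_fun_radial[OF p] by metis
  qed
  with PFP_lower_bound[OF p] show ?thesis
    by simp
qed

end
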